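(* Consider the system $x_{k+1}=Ax_k+Bw_k$, $y^i_k=C^ix_k+D^iv^i_k$ ($i\in\mathcal V=\{1,\dots,N\}$) in the noise-free case, i.e. $\underline w=\overline w=0$ and $\underline v^i=\overline v^i=0$ for all $i$ (so $w_k=0$, $v^i_k=0$), and run the DIO (described in the context) with gains $L^i,\Gamma^i$ and $d\in\mathbb N$ network iterations. Then for every $k\ge0$ the collective framer error satisfies $e_{k+1}=H_k\hat A e_k$, where $\hat A=\mathrm{diag}(\hat A^1,\dots,\hat A^N)$, $\hat A^i=\begin{bmatrix}(\tilde A^i)^+ & (\tilde A^i)^-\\ (\tilde A^i)^- & (\tilde A^i)^+\end{bmatrix}$, and $H_k\in\{0,1\}^{2Nn\times 2Nn}$ is the matrix whose row $\underline{\mathrm{id}}(i,s)$ equals $\mathbf e^\top_{\underline{\mathrm{id}}(j^*,s)}$ with $j^*=\min\big(\arg\max_{j\in\mathcal N_i^d}(\underline x^{j,0}_{k+1})_s\big)$, and whose row $\overline{\mathrm{id}}(i,s)$ equals $\mathbf e^\top_{\overline{\mathrm{id}}(j^\dagger,s)}$ with $j^\dagger=\min\big(\arg\min_{j\in\mathcal N_i^d}(\overline x^{j,0}_{k+1})_s\big)$, for all $i\in\mathcal V$, $s\in\{1,\dots,n\}$. Moreover, $H_k\hat A\in\mathcal F$, where $\mathcal F$ is the set of matrices $M\in\mathbb R^{2Nn\times2Nn}$ such that for every $i\in\mathcal V$ and $s\in\{1,\dots,n\}$, row $\underline{\mathrm{id}}(i,s)$ of $M$ equals row $\underline{\mathrm{id}}(j,s)$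 of $\hat A$ for some $j\in\mathcal N_i^d$, and row $\overline{\mathrm{id}}(i,s)$ of $M$ equals row $\overline{\mathrm{id}}(j',s)$ of $\hat A$ for some $j'\in\mathcal N_i^d$ (so $\mathcal F$ has independent row uncertainties).
   Context: Entrywise inequalities, max, min; $M^+_{ij}=\max\{M_{ij},0\}$, $M^-=M^+-M$. $G=(\mathcal V,E)$ is a directed graph, $\mathcal N_i=\{j:(i,j)\in E\}\cup\{i\}$, $\mathcal N_i^d$ is the set of nodes reachable from $i$ by a directed path of length at most $d$ (including $i$). DIO: $T^i=I_n-\Gamma^iC^i$, $\tilde A^i=T^iA-L^iC^i$; initialize $\underline x^i_0=\underline x_0$, $\overline x^i_0=\overline x_0$; for each $k$, each agent computes (noise bounds being zero here) $\underline x^{i,0}_{k+1}=(\tilde A^i)^+\underline x^i_k-(\tilde A^i)^-\overline x^i_k+L^iy^i_k+\Gamma^iy^i_{k+1}$, $\overline x^{i,0}_{k+1}=(\tilde A^i)^+\overline x^i_k-(\tilde A^i)^-\underline x^i_k+L^iy^i_k+\Gamma^iy^i_{k+1}$, and then $\underline x^i_{k+1}=\max_{j\in\mathcal N_i^d}\underline x^{j,0}_{k+1}$, $\overline x^i_{k+1}=\min_{j\in\mathcal N_i^d}\overline x^{j,0}_{k+1}$ (obtained by $d$ rounds of max/min over $\mathcal N_i$). Errors: $\underline e^i_k=x_k-\underline x^i_k$, $\overline e^i_k=\overline x^i_k-x_k$, and $e_k=[(\underline e^1_k)^\top\ (\overline e^1_k)^\top\ \cdots\ (\underline e^N_k)^\top\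 (\overline e^N_k)^\top]^\top\in\mathbb R^{2Nn}$. Indices (1-based): $\underline{\mathrm{id}}(i,s)=2n(i-1)+s$, $\overline{\mathrm{id}}(i,s)=2n(i-1)+n+s$, the positions of $(\underline e^i)_s$ and $(\overline e^i)_s$ in $e$; $\mathbf e_m$ is the $m$-th standard basis vector of $\mathbb R^{2Nn}$. *)

theory Defs
  imports "Jordan_Normal_Form.Matrix"
begin

(* Agents are indexed 0..N-1 and state components 0..n-1 (0-based, shift of the
   paper's 1-based indices). *)

definition pos_part :: "real mat \<Rightarrow> real mat" where
  "pos_part M = map_mat (\<lambda>a. max a 0) M"

definition neg_part :: "real mat \<Rightarrow> real mat" where
  "neg_part M = pos_part M - M"

definition reach :: "(nat \<times> nat) set \<Rightarrow> nat \<Rightarrow> nat \<Rightarrow> nat set" where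
  "reach E d i = {j. \<exists>l\<le>d. (i, j) \<in> E ^^ l}"

(* positions of (lower e^i)_s and (upper e^i)_s in the stacked error (0-based) *)
definition idlo :: "nat \<Rightarrow> nat \<Rightarrow> nat \<Rightarrow> nat" where
  "idlo n i s = 2 * n * i + s"

definition idhi :: "nat \<Rightarrow> nat \<Rightarrow> nat \<Rightarrow> nat" where
  "idhi n i s = 2 * n * i + n + s"

definition argmax_set :: "'a set \<Rightarrow> ('a \<Rightarrow> real) \<Rightarrow> 'a set" where
  "argmax_set S f = {j \<in> S. \<forall>j'\<in>S. f j' \<le> f j}"

definition argmin_set :: "'a set \<Rightarrow> ('a \<Rightarrow> real) \<Rightarrow> 'a set" where
  "argmin_set S f = {j \<in> S. \<forall>j'\<in>S. f j \<le> f j'}"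

definition Atil :: "nat \<Rightarrow> real mat \<Rightarrow> real mat \<Rightarrow> real mat \<Rightarrow> real mat \<Rightarrow> real mat" where
  "Atil n A C L \<Gamma> = (1\<^sub>m n - \<Gamma> * C) * A - L * C"

definition Ahat_blk :: "real mat \<Rightarrow> real mat" where
  "Ahat_blk At = four_block_mat (pos_part At) (neg_part At) (neg_part At) (pos_part At)"

definition err_vec :: "nat \<Rightarrow> nat \<Rightarrow> real vec \<Rightarrow> (nat \<Rightarrow> real vec) \<Rightarrow> (nat \<Rightarrow> real vec) \<Rightarrow> real vec" where
  "err_vec N n x lo hi = vec (2 * N * n) (\<lambda>r.
     let i = r div (2 * n); q = r mod (2 * n) in
     if q < n then x $ q - lo i $ q else hi i $ (q - n) - x $ (q - n))"

definition frF :: "nat \<Rightarrow> nat \<Rightarrow> (nat \<Rightarrow> nat set) \<Rightarrow> real mat \<Rightarrow> real mat set" where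
  "frF N n Nd Ah = {M \<in> carrier_mat (2 * N * n) (2 * N * n).
     \<forall>i<N. \<forall>s<n.
       (\<exists>j\<in>Nd i. row M (idlo n i s) = row Ah (idlo n j s)) \<and>
       (\<exists>j'\<in>Nd i. row M (idhi n i s) = row Ah (idhi n j' s))}"

end

theory Submission
  imports Defs
begin

(*
  Without noise the true state satisfies x(k+1) = At^i x(k) + L^i y^i(k) + \<Gamma>^i y^i(k+1) for
  every agent i, so the measurement terms cancel in the errors of the local predictions.
  Writing At^i = (At^i)^+ - (At^i)^-, the prediction error of agent i is Ahat^i applied to
  its current error, and stacking the agents gives the block-diagonal Ahat. The max/min over
  the d-hop neighbourhood then replaces each component of an error by the same component of
  the prediction error of a maximising/minimising neighbour: this is the row selection H_k,
  and every row of H_k Ahat is a row of Ahat belonging to a neighbour, i.e. H_k Ahat lies in F.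
*)

lemma block_index_less:
  fixes j l a b :: nat
  assumes "j < l" and "a < b"
  shows "b * j + a < b * l"
proof -
  have "b * j + a < b * Suc j"
    using assms(2) by simp
  also have "\<dots> \<le> b * l"
    using assms(1) by (intro mult_le_mono2) simp
  finally show ?thesis .
qed

lemma diag_block_mat_carrier:
  assumes "\<forall>B\<in>set Bs. B \<in> carrier_mat b b"
  shows "diag_block_mat Bs \<in> carrier_mat (b * length Bs) (b * length Bs)"
  using assms by (induction Bs) (auto simp: Let_def)

lemma index_diag_block_mat_mult_vec:
  fixes Bs :: "'a :: semiring_0 mat list"
  assumes "\<forall>B\<in>set Bs. B \<in> carrier_mat b b" and "j < length Bs" and "a < b"
    and "e \<in> carrier_vec (b * length Bs)"
  shows "(diag_block_mat Bs *\<^sub>v e) $ (b * j + a) = (Bs ! j *\<^sub>v vec b (\<lambda>c. e $ (b * j + c))) $ a"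
  using assms
proof (induction Bs arbitrary: j e)
  case Nil
  then show ?case by simp
next
  case (Cons B Bs)
  let ?D = "diag_block_mat Bs" and ?m = "b * length Bs"
  let ?e1 = "vec_first e b" and ?e2 = "vec_last e ?m"
  have B: "B \<in> carrier_mat b b" and D: "?D \<in> carrier_mat ?m ?m"
    using Cons.prems(1) diag_block_mat_carrier[of Bs b] by auto
  have "e \<in> carrier_vec (b + ?m)"
    using Cons.prems(4) by simp
  then have e: "?e1 @\<^sub>v ?e2 = e"
    by (rule vec_first_last_append)
  have blocks: "diag_block_mat (B # Bs) *\<^sub>v e =
      (B *\<^sub>v ?e1) @\<^sub>v (?D *\<^sub>v ?e2)"
    using mult_mat_vec_split[OF B D vec_first_carrier[of e] vec_last_carrier[of e], unfolded e] B D
    by (simp add: Let_def)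
  show ?case
  proof (cases j)
    case 0
    then show ?thesis
      using blocks B D Cons.prems(3) by (simp add: vec_first_def)
  next
    case (Suc j')
    then have "(diag_block_mat (B # Bs) *\<^sub>v e) $ (b * j + a) = (?D *\<^sub>v ?e2) $ (b * j' + a)"
      using blocks B D block_index_less[of j' "length Bs" a b] Cons.prems(2,3) by simp
    also have "\<dots> = (Bs ! j' *\<^sub>v vec b (\<lambda>c. ?e2 $ (b * j' + c))) $ a"
      using Cons.IH Cons.prems Suc B by simp
    also have "vec b (\<lambda>c. ?e2 $ (b * j' + c)) = vec b (\<lambda>c. e $ (b * j + c))"
      using Cons.prems(2,4) Suc
      by (intro eq_vecI) (auto simp: vec_last_def block_index_less add.assoc)
    finally show ?thesis using Suc by simp
  qed
qed

lemma row_mult_unit_vec: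
  fixes H :: "'a :: semiring_1 mat"
  assumes H: "H \<in> carrier_mat nr m" and A: "A \<in> carrier_mat m nc"
    and "r < nr" and "t < m" and "row H r = unit_vec m t"
  shows "row (H * A) r = row A t"
proof (rule eq_vecI)
  fix c assume "c < dim_vec (row A t)"
  then have c: "c < nc"
    using A by simp
  have "row (H * A) r $ c = unit_vec m t \<bullet> col A c"
    using assms c by simp
  also have "\<dots> = row A t $ c"
    using A c \<open>t < m\<close> by simp
  finally show "row (H * A) r $ c = row A t $ c" .
qed (use assms in simp)

lemma mult_mat_zero_vec: "B \<in> carrier_mat nr nc \<Longrightarrow> B *\<^sub>v 0\<^sub>v nc = (0\<^sub>v nr :: 'a :: semiring_0 vec)"
  by (intro eq_vecI) auto

lemma argmax_set_Min:
  fixes f :: "'a :: linorder \<Rightarrow> real"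
  assumes "finite S" and "S \<noteq> {}"
  shows "Min (argmax_set S f) \<in> S \<and> f (Min (argmax_set S f)) = Max (f ` S)"
proof -
  have char: "j \<in> argmax_set S f \<longleftrightarrow> j \<in> S \<and> Max (f ` S) = f j" for j
    using assms by (auto simp: argmax_set_def Max_eq_iff)
  have "Max (f ` S) \<in> f ` S"
    using assms by (intro Max_in) auto
  then obtain j where "j \<in> S" "Max (f ` S) = f j"
    by auto
  then have "argmax_set S f \<noteq> {}"
    using char by blast
  moreover have "finite (argmax_set S f)"
    using assms(1) by (simp add: argmax_set_def)
  ultimately have "Min (argmax_set S f) \<in> argmax_set S f"
    by (intro Min_in)
  then show ?thesis
    using char by auto
qed

lemma argmin_set_Min:
  fixes f :: "'a :: linorder \<Rightarrow> real"
  assumes "finite S" and "S \<noteq> {}"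
  shows "Min (argmin_set S f) \<in> S \<and> f (Min (argmin_set S f)) = Min (f ` S)"
proof -
  have char: "j \<in> argmin_set S f \<longleftrightarrow> j \<in> S \<and> Min (f ` S) = f j" for j
    using assms by (auto simp: argmin_set_def Min_eq_iff)
  have "Min (f ` S) \<in> f ` S"
    using assms by (intro Min_in) auto
  then obtain j where "j \<in> S" "Min (f ` S) = f j"
    by auto
  then have "argmin_set S f \<noteq> {}"
    using char by blast
  moreover have "finite (argmin_set S f)"
    using assms(1) by (simp add: argmin_set_def)
  ultimately have "Min (argmin_set S f) \<in> argmin_set S f"
    by (intro Min_in)
  then show ?thesis
    using char by auto
qed

lemma reach_subset:
  assumes "E \<subseteq> {0..<N} \<times> {0..<N}" and "i < N"
  shows "reach E d i \<subseteq> {0..<N}"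
proof
  fix j assume "j \<in> reach E d i"
  then obtain l where "(i, j) \<in> E ^^ l"
    unfolding reach_def by auto
  then show "j \<in> {0..<N}"
    using assms by (cases l) (auto simp: relpow.simps)
qed

lemma self_in_reach: "i \<in> reach E d i"
  unfolding reach_def by force

lemma idlo_less: "i < N \<Longrightarrow> s < n \<Longrightarrow> idlo n i s < 2 * N * n"
  unfolding idlo_def using block_index_less[of i N s "2 * n"] by (simp add: ac_simps)

lemma idhi_less: "i < N \<Longrightarrow> s < n \<Longrightarrow> idhi n i s < 2 * N * n"
  unfolding idhi_def using block_index_less[of i N "n + s" "2 * n"] by (simp add: ac_simps)

lemma idlo_idhi_cases:
  assumes "r < 2 * N * n"
  obtains i s where "i < N" "s < n" "r = idlo n i s"
    | i s where "i < N" "s < n" "r = idhi n i s"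
proof -
  have "r < N * (2 * n)"
    using assms by (simp add: ac_simps)
  then have i: "r div (2 * n) < N"
    by (rule less_mult_imp_div_less)
  have "0 < 2 * n"
    using assms by (cases "n = 0") auto
  then have q: "r mod (2 * n) < 2 * n"
    by (rule mod_less_divisor)
  have r: "r = 2 * n * (r div (2 * n)) + r mod (2 * n)"
    by simp
  show ?thesis
  proof (cases "r mod (2 * n) < n")
    case True
    then show ?thesis using that(1)[OF i True] r unfolding idlo_def by simp
  next
    case False
    then show ?thesis
      using that(2)[OF i, of "r mod (2 * n) - n"] q r unfolding idhi_def by simp
  qed
qed

lemma dim_err_vec [simp]: "dim_vec (err_vec N n x lo hi) = 2 * N * n"
  unfolding err_vec_def by simp

lemma index_err_vec_idlo:
  "i < N \<Longrightarrow> s < n \<Longrightarrow> err_vec N n x lo hi $ idlo n i s = x $ s - lo i $ s"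
  using idlo_less[of i N s n] unfolding err_vec_def idlo_def by (simp add: Let_def)

lemma index_err_vec_idhi:
  "i < N \<Longrightarrow> s < n \<Longrightarrow> err_vec N n x lo hi $ idhi n i s = hi i $ s - x $ s"
proof -
  assume "i < N" "s < n"
  moreover have "idhi n i s = (n + s) + i * (2 * n)"
    unfolding idhi_def by simp
  ultimately show ?thesis
    using idhi_less[of i N s n] unfolding err_vec_def by (simp add: Let_def)
qed

lemma err_vec_eqI:
  assumes "dim_vec v = 2 * N * n"
    and "\<And>i s. i < N \<Longrightarrow> s < n \<Longrightarrow> v $ idlo n i s = x $ s - lo i $ s"
    and "\<And>i s. i < N \<Longrightarrow> s < n \<Longrightarrow> v $ idhi n i s = hi i $ s - x $ s"
  shows "v = err_vec N n x lo hi"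
proof (rule eq_vecI)
  fix r assume "r < dim_vec (err_vec N n x lo hi)"
  then have "r < 2 * N * n"
    by simp
  then show "v $ r = err_vec N n x lo hi $ r"
    by (rule idlo_idhi_cases) (simp_all add: assms index_err_vec_idlo index_err_vec_idhi)
qed (use assms in simp)

lemma err_vec_cong:
  assumes "\<And>i. i < N \<Longrightarrow> lo i = lo' i" and "\<And>i. i < N \<Longrightarrow> hi i = hi' i"
  shows "err_vec N n x lo hi = err_vec N n x lo' hi'"
  by (rule err_vec_eqI) (simp_all add: assms index_err_vec_idlo index_err_vec_idhi)

lemma err_vec_block:
  assumes "i < N" and "x \<in> carrier_vec n" "lo i \<in> carrier_vec n" "hi i \<in> carrier_vec n"
  shows "vec (2 * n) (\<lambda>c. err_vec N n x lo hi $ (2 * n * i + c)) = (x - lo i) @\<^sub>v (hi i - x)"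
proof (rule eq_vecI)
  fix c assume "c < dim_vec ((x - lo i) @\<^sub>v (hi i - x))"
  then have "c < 2 * n"
    using assms by simp
  then consider "c < n" | "n \<le> c" "c - n < n" by linarith
  then show "vec (2 * n) (\<lambda>c. err_vec N n x lo hi $ (2 * n * i + c)) $ c = ((x - lo i) @\<^sub>v (hi i - x)) $ c"
  proof cases
    case 1
    then show ?thesis
      using index_err_vec_idlo[OF assms(1), of c n x lo hi] assms unfolding idlo_def by simp
  next
    case 2
    then show ?thesis
      using index_err_vec_idhi[OF assms(1) 2(2), of x lo hi] assms unfolding idhi_def by simp
  qed
qed (use assms in simp)

lemma diag_block_mat_mult_err_vec:
  assumes Bs: "\<And>j. j < N \<Longrightarrow> Bs j \<in> carrier_mat (2 * n) (2 * n)"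
    and x: "x \<in> carrier_vec n" and lo: "\<And>j. j < N \<Longrightarrow> lo j \<in> carrier_vec n"
    and hi: "\<And>j. j < N \<Longrightarrow> hi j \<in> carrier_vec n"
    and x': "x' \<in> carrier_vec n"
    and step: "\<And>j. j < N \<Longrightarrow> Bs j *\<^sub>v ((x - lo j) @\<^sub>v (hi j - x)) = (x' - lo' j) @\<^sub>v (hi' j - x')"
  shows "diag_block_mat (map Bs [0..<N]) *\<^sub>v err_vec N n x lo hi = err_vec N n x' lo' hi'"
proof -
  let ?Bs = "map Bs [0..<N]"
  have blocks: "\<forall>B\<in>set ?Bs. B \<in> carrier_mat (2 * n) (2 * n)"
    using Bs by simp
  have e: "err_vec N n x lo hi \<in> carrier_vec (2 * n * length ?Bs)"
    by (rule carrier_vecI) simp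
  have block_row: "(diag_block_mat ?Bs *\<^sub>v err_vec N n x lo hi) $ (2 * n * j + a)
      = ((x' - lo' j) @\<^sub>v (hi' j - x')) $ a" if j: "j < N" and a: "a < 2 * n" for j a
  proof -
    have "(diag_block_mat ?Bs *\<^sub>v err_vec N n x lo hi) $ (2 * n * j + a)
        = (Bs j *\<^sub>v vec (2 * n) (\<lambda>c. err_vec N n x lo hi $ (2 * n * j + c))) $ a"
      using index_diag_block_mat_mult_vec[OF blocks _ a e, of j] j by simp
    also have "\<dots> = ((x' - lo' j) @\<^sub>v (hi' j - x')) $ a"
      unfolding err_vec_block[of j N x n lo hi, OF j x lo[OF j] hi[OF j]] step[OF j] ..
    finally show ?thesis .
  qed
  show ?thesis
  proof (rule err_vec_eqI)
    show "dim_vec (diag_block_mat ?Bs *\<^sub>v err_vec N n x lo hi) = 2 * N * n"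
      using diag_block_mat_carrier[OF blocks] by simp
  next
    fix i s assume i: "i < N" and s: "s < n"
    have lo': "dim_vec (lo' i) = n"
      using arg_cong[OF step[OF i], of dim_vec] Bs[OF i] x' by simp
    show "(diag_block_mat ?Bs *\<^sub>v err_vec N n x lo hi) $ idlo n i s = x' $ s - lo' i $ s"
      using block_row[OF i, of s] s x' lo' unfolding idlo_def by simp
    show "(diag_block_mat ?Bs *\<^sub>v err_vec N n x lo hi) $ idhi n i s = hi' i $ s - x' $ s"
      using block_row[OF i, of "n + s"] s x' lo' unfolding idhi_def by (simp add: add.assoc)
  qed
qed

lemma pos_part_carrier: "M \<in> carrier_mat nr nc \<Longrightarrow> pos_part M \<in> carrier_mat nr nc"
  unfolding pos_part_def by simp

lemma neg_part_carrier: "M \<in> carrier_mat nr nc \<Longrightarrow> neg_part M \<in> carrier_mat nr nc"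
  unfolding neg_part_def by (rule minus_carrier_mat)

lemma pos_part_minus_neg_part: "M \<in> carrier_mat nr nc \<Longrightarrow> pos_part M - neg_part M = M"
  unfolding neg_part_def by (intro eq_matI) (auto simp: pos_part_def)

lemma Ahat_blk_carrier: "M \<in> carrier_mat n n \<Longrightarrow> Ahat_blk M \<in> carrier_mat (2 * n) (2 * n)"
  unfolding Ahat_blk_def mult_2 by (intro four_block_carrier_mat pos_part_carrier neg_part_carrier)

lemma Ahat_blk_mult_append:
  assumes "M \<in> carrier_mat n n" and "a \<in> carrier_vec n" and "b \<in> carrier_vec n"
  shows "Ahat_blk M *\<^sub>v (a @\<^sub>v b) =
    (pos_part M *\<^sub>v a + neg_part M *\<^sub>v b) @\<^sub>v (neg_part M *\<^sub>v a + pos_part M *\<^sub>v b)"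
  unfolding Ahat_blk_def using assms pos_part_carrier neg_part_carrier
  by (intro four_block_mat_mult_vec[of _ n n _ _ _ n]) auto

lemma framer_error_step:
  assumes M: "M \<in> carrier_mat n n"
    and vecs: "x \<in> carrier_vec n" "lo \<in> carrier_vec n" "hi \<in> carrier_vec n" "u \<in> carrier_vec n"
  shows "Ahat_blk M *\<^sub>v ((x - lo) @\<^sub>v (hi - x)) =
    (M *\<^sub>v x + u - (pos_part M *\<^sub>v lo - neg_part M *\<^sub>v hi + u)) @\<^sub>v
    (pos_part M *\<^sub>v hi - neg_part M *\<^sub>v lo + u - (M *\<^sub>v x + u))"
proof -
  let ?P = "pos_part M" and ?Q = "neg_part M"
  have P: "?P \<in> carrier_mat n n" and Q: "?Q \<in> carrier_mat n n"
    using M by (rule pos_part_carrier, rule neg_part_carrier)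
  have Mx: "M *\<^sub>v x = ?P *\<^sub>v x - ?Q *\<^sub>v x"
    using pos_part_minus_neg_part[OF M] minus_mult_distrib_mat_vec[OF P Q vecs(1)] by simp
  show ?thesis
    unfolding Ahat_blk_mult_append[OF M minus_carrier_vec[OF vecs(1,2)] minus_carrier_vec[OF vecs(3,1)]]
    using P Q vecs by (intro arg_cong2[where f = append_vec] eq_vecI)
      (auto simp: Mx mult_minus_distrib_mat_vec)
qed

lemma Atil_carrier:
  assumes "A \<in> carrier_mat n n" and "C \<in> carrier_mat p n"
    and "L \<in> carrier_mat n p" and "\<Gamma> \<in> carrier_mat n p"
  shows "Atil n A C L \<Gamma> \<in> carrier_mat n n"
  unfolding Atil_def using assms by (intro minus_carrier_mat mult_carrier_mat[of _ n p]) auto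

lemma Atil_mult_vec:
  assumes A: "A \<in> carrier_mat n n" and C: "C \<in> carrier_mat p n"
    and L: "L \<in> carrier_mat n p" and G: "\<Gamma> \<in> carrier_mat n p" and x: "x \<in> carrier_vec n"
  shows "A *\<^sub>v x = Atil n A C L \<Gamma> *\<^sub>v x + (L *\<^sub>v (C *\<^sub>v x) + \<Gamma> *\<^sub>v (C *\<^sub>v (A *\<^sub>v x)))"
proof -
  have IGC: "1\<^sub>m n - \<Gamma> * C \<in> carrier_mat n n"
    using G C by (intro minus_carrier_mat) simp
  have "Atil n A C L \<Gamma> *\<^sub>v x = ((1\<^sub>m n - \<Gamma> * C) * A) *\<^sub>v x - (L * C) *\<^sub>v x"
    unfolding Atil_def using IGC A L C x by (intro minus_mult_distrib_mat_vec) auto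
  also have "\<dots> = (1\<^sub>m n - \<Gamma> * C) *\<^sub>v (A *\<^sub>v x) - L *\<^sub>v (C *\<^sub>v x)"
    using IGC A L C x by simp
  also have "\<dots> = A *\<^sub>v x - \<Gamma> *\<^sub>v (C *\<^sub>v (A *\<^sub>v x)) - L *\<^sub>v (C *\<^sub>v x)"
    using minus_mult_distrib_mat_vec[of "1\<^sub>m n" n n "\<Gamma> * C" "A *\<^sub>v x"] A C G x by simp
  finally show ?thesis
    using A C L G x by (intro eq_vecI) auto
qed

lemma DIO_prediction_error:
  assumes A: "A \<in> carrier_mat n n" and C: "C \<in> carrier_mat p n"
    and L: "L \<in> carrier_mat n p" and G: "\<Gamma> \<in> carrier_mat n p"
    and vecs: "x \<in> carrier_vec n" "lo \<in> carrier_vec n" "hi \<in> carrier_vec n"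
    and lo': "lo' = pos_part (Atil n A C L \<Gamma>) *\<^sub>v lo - neg_part (Atil n A C L \<Gamma>) *\<^sub>v hi
      + L *\<^sub>v (C *\<^sub>v x) + \<Gamma> *\<^sub>v (C *\<^sub>v (A *\<^sub>v x))"
    and hi': "hi' = pos_part (Atil n A C L \<Gamma>) *\<^sub>v hi - neg_part (Atil n A C L \<Gamma>) *\<^sub>v lo
      + L *\<^sub>v (C *\<^sub>v x) + \<Gamma> *\<^sub>v (C *\<^sub>v (A *\<^sub>v x))"
  shows "Ahat_blk (Atil n A C L \<Gamma>) *\<^sub>v ((x - lo) @\<^sub>v (hi - x)) = (A *\<^sub>v x - lo') @\<^sub>v (hi' - A *\<^sub>v x)"
proof -
  let ?M = "Atil n A C L \<Gamma>" and ?u = "L *\<^sub>v (C *\<^sub>v x) + \<Gamma> *\<^sub>v (C *\<^sub>v (A *\<^sub>v x))"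
  have M: "?M \<in> carrier_mat n n"
    using A C L G by (rule Atil_carrier)
  have P: "pos_part ?M \<in> carrier_mat n n" and Q: "neg_part ?M \<in> carrier_mat n n"
    using M by (rule pos_part_carrier, rule neg_part_carrier)
  have u: "?u \<in> carrier_vec n"
    using A C L G vecs by simp
  have "lo' = pos_part ?M *\<^sub>v lo - neg_part ?M *\<^sub>v hi + ?u"
    unfolding lo' using P Q L C G A vecs by (intro assoc_add_vec[of _ n]) auto
  moreover have "hi' = pos_part ?M *\<^sub>v hi - neg_part ?M *\<^sub>v lo + ?u"
    unfolding hi' using P Q L C G A vecs by (intro assoc_add_vec[of _ n]) auto
  ultimately show ?thesis
    using framer_error_step[OF M vecs u] Atil_mult_vec[OF A C L G vecs(1)] by simp
qed

lemma noise_free_trajectory: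
  assumes A: "A \<in> carrier_mat n n" and B: "B \<in> carrier_mat n m" and x0: "x 0 \<in> carrier_vec n"
    and sys: "\<And>k. x (Suc k) = A *\<^sub>v x k + B *\<^sub>v w k" and w: "\<And>k. w k = 0\<^sub>v m"
  shows "x k \<in> carrier_vec n \<and> x (Suc k) = A *\<^sub>v x k"
proof (induction k)
  case 0
  then show ?case using x0 sys[of 0] A w mult_mat_zero_vec[OF B] by simp
next
  case (Suc k)
  then show ?case using sys[of "Suc k"] A w mult_mat_zero_vec[OF B] by simp
qed

definition selects_rows ::
    "nat \<Rightarrow> nat \<Rightarrow> (nat \<Rightarrow> nat \<Rightarrow> nat) \<Rightarrow> (nat \<Rightarrow> nat \<Rightarrow> nat) \<Rightarrow> real mat \<Rightarrow> bool" where
  "selects_rows N n jlo jhi H \<longleftrightarrow> H \<in> carrier_mat (2 * N * n) (2 * N * n) \<and>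
     (\<forall>i<N. \<forall>s<n. jlo i s < N \<and> jhi i s < N \<and>
        row H (idlo n i s) = unit_vec (2 * N * n) (idlo n (jlo i s) s) \<and>
        row H (idhi n i s) = unit_vec (2 * N * n) (idhi n (jhi i s) s))"

lemma selects_rows_mult_err_vec:
  assumes "selects_rows N n jlo jhi H"
  shows "H *\<^sub>v err_vec N n x lo hi =
    err_vec N n x (\<lambda>i. vec n (\<lambda>s. lo (jlo i s) $ s)) (\<lambda>i. vec n (\<lambda>s. hi (jhi i s) $ s))"
proof (rule err_vec_eqI)
  have H: "H \<in> carrier_mat (2 * N * n) (2 * N * n)"
    and rows: "\<forall>i<N. \<forall>s<n. jlo i s < N \<and> jhi i s < N \<and>
        row H (idlo n i s) = unit_vec (2 * N * n) (idlo n (jlo i s) s) \<and>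
        row H (idhi n i s) = unit_vec (2 * N * n) (idhi n (jhi i s) s)"
    using assms unfolding selects_rows_def by auto
  have e: "err_vec N n x lo hi \<in> carrier_vec (2 * N * n)"
    by (rule carrier_vecI) simp
  show "dim_vec (H *\<^sub>v err_vec N n x lo hi) = 2 * N * n"
    using H by simp
  fix i s assume i: "i < N" and s: "s < n"
  show "(H *\<^sub>v err_vec N n x lo hi) $ idlo n i s = x $ s - vec n (\<lambda>s. lo (jlo i s) $ s) $ s"
    using rows i s e carrier_matD[OF H] idlo_less[OF i s] idlo_less[of "jlo i s" N s n]
    by (simp add: index_err_vec_idlo)
  show "(H *\<^sub>v err_vec N n x lo hi) $ idhi n i s = vec n (\<lambda>s. hi (jhi i s) $ s) $ s - x $ s"
    using rows i s e carrier_matD[OF H] idhi_less[OF i s] idhi_less[of "jhi i s" N s n]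
    by (simp add: index_err_vec_idhi)
qed

lemma selects_rows_mult_mem_frF:
  assumes sel: "selects_rows N n jlo jhi H" and Ah: "Ah \<in> carrier_mat (2 * N * n) (2 * N * n)"
    and nbr: "\<And>i s. i < N \<Longrightarrow> s < n \<Longrightarrow> jlo i s \<in> Nd i \<and> jhi i s \<in> Nd i"
  shows "H * Ah \<in> frF N n Nd Ah"
proof -
  have H: "H \<in> carrier_mat (2 * N * n) (2 * N * n)"
    using sel by (simp add: selects_rows_def)
  have "row (H * Ah) (idlo n i s) = row Ah (idlo n (jlo i s) s)
      \<and> row (H * Ah) (idhi n i s) = row Ah (idhi n (jhi i s) s)" if i: "i < N" and s: "s < n" for i s
    using sel i s idlo_less[OF i s] idhi_less[OF i s]
      idlo_less[of "jlo i s" N s n] idhi_less[of "jhi i s" N s n]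
    by (auto simp: selects_rows_def intro!: row_mult_unit_vec[OF H Ah])
  then show ?thesis
    unfolding frF_def using H Ah nbr by fastforce
qed

theorem lemma2:
  fixes N n m :: nat and p q :: "nat \<Rightarrow> nat"
    and A B :: "real mat" and C D L \<Gamma> :: "nat \<Rightarrow> real mat"
    and x :: "nat \<Rightarrow> real vec" and w :: "nat \<Rightarrow> real vec"
    and v y :: "nat \<Rightarrow> nat \<Rightarrow> real vec"
    and E :: "(nat \<times> nat) set" and d :: nat
    and x0lo x0hi :: "real vec"
    and xlo xhi xlo0 xhi0 :: "nat \<Rightarrow> nat \<Rightarrow> real vec"
  assumes E: "E \<subseteq> {0..<N} \<times> {0..<N}"
    and A: "A \<in> carrier_mat n n" and B: "B \<in> carrier_mat n m"
    and C: "\<And>i. i < N \<Longrightarrow> C i \<in> carrier_mat (p i) n"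
    and D: "\<And>i. i < N \<Longrightarrow> D i \<in> carrier_mat (p i) (q i)"
    and L: "\<And>i. i < N \<Longrightarrow> L i \<in> carrier_mat n (p i)"
    and G: "\<And>i. i < N \<Longrightarrow> \<Gamma> i \<in> carrier_mat n (p i)"
    and x0: "x0lo \<in> carrier_vec n" "x0hi \<in> carrier_vec n" "x 0 \<in> carrier_vec n"
    and x0_bounds: "\<And>s. s < n \<Longrightarrow> x0lo $ s \<le> x 0 $ s \<and> x 0 $ s \<le> x0hi $ s"
    and w0: "\<And>k. w k = 0\<^sub>v m"
    and v0: "\<And>i k. i < N \<Longrightarrow> v i k = 0\<^sub>v (q i)"
    and sys: "\<And>k. x (Suc k) = A *\<^sub>v x k + B *\<^sub>v w k"
    and meas: "\<And>i k. i < N \<Longrightarrow> y i k = C i *\<^sub>v x k + D i *\<^sub>v v i k"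
    and init_lo: "\<And>i. i < N \<Longrightarrow> xlo i 0 = x0lo"
    and init_hi: "\<And>i. i < N \<Longrightarrow> xhi i 0 = x0hi"
    and pre_lo: "\<And>i k. i < N \<Longrightarrow> xlo0 i (Suc k) =
        pos_part (Atil n A (C i) (L i) (\<Gamma> i)) *\<^sub>v xlo i k
        - neg_part (Atil n A (C i) (L i) (\<Gamma> i)) *\<^sub>v xhi i k
        + L i *\<^sub>v y i k + \<Gamma> i *\<^sub>v y i (Suc k)"
    and pre_hi: "\<And>i k. i < N \<Longrightarrow> xhi0 i (Suc k) =
        pos_part (Atil n A (C i) (L i) (\<Gamma> i)) *\<^sub>v xhi i k
        - neg_part (Atil n A (C i) (L i) (\<Gamma> i)) *\<^sub>v xlo i k
        + L i *\<^sub>v y i k + \<Gamma> i *\<^sub>v y i (Suc k)"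
    and upd_lo: "\<And>i k. i < N \<Longrightarrow> xlo i (Suc k) =
        vec n (\<lambda>s. Max ((\<lambda>j. xlo0 j (Suc k) $ s) ` reach E d i))"
    and upd_hi: "\<And>i k. i < N \<Longrightarrow> xhi i (Suc k) =
        vec n (\<lambda>s. Min ((\<lambda>j. xhi0 j (Suc k) $ s) ` reach E d i))"
  shows "\<forall>k H. H \<in> carrier_mat (2 * N * n) (2 * N * n) \<longrightarrow>
      (\<forall>i<N. \<forall>s<n.
         row H (idlo n i s) = unit_vec (2 * N * n)
           (idlo n (Min (argmax_set (reach E d i) (\<lambda>j. xlo0 j (Suc k) $ s))) s) \<and>
         row H (idhi n i s) = unit_vec (2 * N * n)
           (idhi n (Min (argmin_set (reach E d i) (\<lambda>j. xhi0 j (Suc k) $ s))) s)) \<longrightarrow>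
      (let Ah = diag_block_mat (map (\<lambda>i. Ahat_blk (Atil n A (C i) (L i) (\<Gamma> i))) [0..<N]) in
        err_vec N n (x (Suc k)) (\<lambda>i. xlo i (Suc k)) (\<lambda>i. xhi i (Suc k))
          = (H * Ah) *\<^sub>v err_vec N n (x k) (\<lambda>i. xlo i k) (\<lambda>i. xhi i k)
        \<and> H * Ah \<in> frF N n (reach E d) Ah)"
proof (intro allI impI)
  fix k and H :: "real mat"
  assume H: "H \<in> carrier_mat (2 * N * n) (2 * N * n)"
    and rows: "\<forall>i<N. \<forall>s<n.
      row H (idlo n i s) = unit_vec (2 * N * n)
        (idlo n (Min (argmax_set (reach E d i) (\<lambda>j. xlo0 j (Suc k) $ s))) s) \<and>
      row H (idhi n i s) = unit_vec (2 * N * n)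
        (idhi n (Min (argmin_set (reach E d i) (\<lambda>j. xhi0 j (Suc k) $ s))) s)"
  \<comment> \<open>The recursion is an exact identity.\<close>
  define At where "At i = Atil n A (C i) (L i) (\<Gamma> i)" for i
  define Ah where "Ah = diag_block_mat (map (\<lambda>i. Ahat_blk (At i)) [0..<N])"
  define jlo where "jlo i s = Min (argmax_set (reach E d i) (\<lambda>j. xlo0 j (Suc k) $ s))" for i s
  define jhi where "jhi i s = Min (argmin_set (reach E d i) (\<lambda>j. xhi0 j (Suc k) $ s))" for i s
  have x: "x k' \<in> carrier_vec n" "x (Suc k') = A *\<^sub>v x k'" for k'
    using noise_free_trajectory[OF A B x0(3) sys w0] by auto
  have y: "y i k' = C i *\<^sub>v x k'" if "i < N" for i k'
    using meas[OF that] v0[OF that] mult_mat_zero_vec[OF D[OF that]] C[OF that] x by simp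
  have bounds: "xlo i k' \<in> carrier_vec n" "xhi i k' \<in> carrier_vec n" if "i < N" for i k'
    using that x0 init_lo init_hi upd_lo upd_hi by (cases k'; simp)+
  have At: "At i \<in> carrier_mat n n" if "i < N" for i
    unfolding At_def using A C[OF that] L[OF that] G[OF that] by (rule Atil_carrier)
  have Ah: "Ah \<in> carrier_mat (2 * N * n) (2 * N * n)"
    unfolding Ah_def using diag_block_mat_carrier[of "map (\<lambda>i. Ahat_blk (At i)) [0..<N]" "2 * n"]
      Ahat_blk_carrier[OF At] by (simp add: ac_simps)
  have pre: "Ah *\<^sub>v err_vec N n (x k) (\<lambda>i. xlo i k) (\<lambda>i. xhi i k)
      = err_vec N n (x (Suc k)) (\<lambda>i. xlo0 i (Suc k)) (\<lambda>i. xhi0 i (Suc k))"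
    unfolding Ah_def x(2)
    by (rule diag_block_mat_mult_err_vec)
      (auto simp: Ahat_blk_carrier At[unfolded At_def] mult_mat_vec_carrier[OF A x(1)] x bounds
        At_def y pre_lo pre_hi intro!: DIO_prediction_error A C L G)
  have nbr:
    "jlo i s \<in> reach E d i \<and> xlo0 (jlo i s) (Suc k) $ s = (MAX j\<in>reach E d i. xlo0 j (Suc k) $ s)"
    "jhi i s \<in> reach E d i \<and> xhi0 (jhi i s) (Suc k) $ s = (MIN j\<in>reach E d i. xhi0 j (Suc k) $ s)"
    if "i < N" for i s
    unfolding jlo_def jhi_def using reach_subset[OF E that] self_in_reach[of i E d]
    by (auto intro!: argmax_set_Min argmin_set_Min intro: finite_subset)
  have sel: "selects_rows N n jlo jhi H"
    unfolding selects_rows_def using H rows nbr reach_subset[OF E] jlo_def jhi_def by fastforce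
  have post: "err_vec N n (x (Suc k)) (\<lambda>i. xlo i (Suc k)) (\<lambda>i. xhi i (Suc k))
      = H *\<^sub>v err_vec N n (x (Suc k)) (\<lambda>i. xlo0 i (Suc k)) (\<lambda>i. xhi0 i (Suc k))"
    unfolding selects_rows_mult_err_vec[OF sel]
    using nbr by (intro err_vec_cong) (simp_all add: upd_lo upd_hi)
  show "let Ah = diag_block_mat (map (\<lambda>i. Ahat_blk (Atil n A (C i) (L i) (\<Gamma> i))) [0..<N]) in
      err_vec N n (x (Suc k)) (\<lambda>i. xlo i (Suc k)) (\<lambda>i. xhi i (Suc k))
        = (H * Ah) *\<^sub>v err_vec N n (x k) (\<lambda>i. xlo i k) (\<lambda>i. xhi i k)
      \<and> H * Ah \<in> frF N n (reach E d) Ah"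
    unfolding Let_def At_def[symmetric] Ah_def[symmetric] post pre[symmetric]
    using H Ah selects_rows_mult_mem_frF[OF sel Ah] nbr by (simp add: carrier_vecI)
qed

end
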